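(* Let $(\Sigma,E)$ be an algebraic theory with free monad $(T,\eta,\mu)$, and let $\alpha:TX\to X$ be a $T$-semialgebra. Let $(X,I)$ be the $\Sigma^{\mathrm{s}}$-algebra with $I(\mathsf{a})=\alpha\circ\eta_X$ and $I(\mathsf{op})=\alpha\circ\mathsf{op}^{TX}\circ(\eta_X)^n$ for each $(\mathsf{op}:n)\in\Sigma$. Then for every $\Sigma$-term $t(v_1,\dots,v_n)$ over $\mathrm{Var}$ of depth at least $1$ and every assignment $\sigma:\mathrm{Var}\to X$, $I(t)_\sigma=\alpha\big(\mathsf{int}^{TX}(t)_{\eta_X\circ\sigma}\big)$.
   Context: $T=T_{\Sigma,E}$: $TX$ is the set of $\Sigma$-terms over $X$ modulo the smallest congruence containing substitution instances of $E$, a $(\Sigma,E)$-algebra via $\mathsf{op}^{TX}(\overline{t_1},\dots,\overline{t_n})=\overline{\mathsf{op}(t_1,\dots,t_n)}$; $\eta_X(x)=\overline{x}$; $\mu_X$ flattens terms. A $T$-semialgebra is $\alpha:TX\to X$ with $\alpha\circ\mu_X=\alpha\circ T\alpha$. $\Sigma^{\mathrm{s}}=\Sigma\uplus\{\mathsf{a}:1\}$. For a $\Sigma$- (or $\Sigma^{\mathrm{s}}$-) algebra $(X,I)$ and a function $f:\mathrm{Var}\to X$, $I(t)_f$ denotes the value of $t$: $I(v)_f=f(v)$, $I(\mathsf{op}(t_1,\dots,t_n))_f=I(\mathsf{op})(I(t_1)_f,\dots,I(t_n)_f)$; $\mathsf{int}^{TX}(t)_g$ denotes the analogous value in the algebra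 $(TX,\mathsf{op}^{TX})$ under $g:\mathrm{Var}\to TX$. Depth: variables depth $0$, constants depth $1$, $\mathsf{op}(t_1,\dots,t_n)$ depth $1+\max$. *)

theory Defs
  imports Main
begin

(* Sigma-terms: signature symbols of type 'f with arity function ar :: 'f => nat *)
datatype ('f, 'v) trm = Var 'v | App 'f "('f, 'v) trm list"

fun vars :: "('f, 'v) trm \<Rightarrow> 'v set" where
  "vars (Var v) = {v}"
| "vars (App f ts) = (\<Union>t\<in>set ts. vars t)"

fun wf :: "('f \<Rightarrow> nat) \<Rightarrow> 'v set \<Rightarrow> ('f, 'v) trm \<Rightarrow> bool" where
  "wf ar A (Var v) = (v \<in> A)"
| "wf ar A (App f ts) = (length ts = ar f \<and> (\<forall>t\<in>set ts. wf ar A t))"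

fun subst :: "('v \<Rightarrow> ('f, 'w) trm) \<Rightarrow> ('f, 'v) trm \<Rightarrow> ('f, 'w) trm" where
  "subst \<theta> (Var v) = \<theta> v"
| "subst \<theta> (App f ts) = App f (map (subst \<theta>) ts)"

fun rename :: "('v \<Rightarrow> 'w) \<Rightarrow> ('f, 'v) trm \<Rightarrow> ('f, 'w) trm" where
  "rename g (Var v) = Var (g v)"
| "rename g (App f ts) = App f (map (rename g) ts)"

fun eval :: "('f \<Rightarrow> 'a list \<Rightarrow> 'a) \<Rightarrow> ('v \<Rightarrow> 'a) \<Rightarrow> ('f, 'v) trm \<Rightarrow> 'a" where
  "eval I f (Var v) = f v"
| "eval I f (App g ts) = I g (map (eval I f) ts)"

fun depth :: "('f, 'v) trm \<Rightarrow> nat" where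
  "depth (Var v) = 0"
| "depth (App f ts) = Suc (foldr max (map depth ts) 0)"

inductive eqvE :: "('f \<Rightarrow> nat) \<Rightarrow> (('f, 'v) trm \<times> ('f, 'v) trm) set \<Rightarrow> 'x set
                   \<Rightarrow> ('f, 'x) trm \<Rightarrow> ('f, 'x) trm \<Rightarrow> bool"
  for ar E A where
  refl: "wf ar A t \<Longrightarrow> eqvE ar E A t t"
| sym: "eqvE ar E A t u \<Longrightarrow> eqvE ar E A u t"
| trans: "eqvE ar E A t u \<Longrightarrow> eqvE ar E A u w \<Longrightarrow> eqvE ar E A t w"
| cong: "length ts = ar f \<Longrightarrow> list_all2 (eqvE ar E A) ts us
          \<Longrightarrow> eqvE ar E A (App f ts) (App f us)"
| inst: "(l, r) \<in> E \<Longrightarrow> (\<forall>v \<in> vars l \<union> vars r. wf ar A (\<theta> v))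
          \<Longrightarrow> eqvE ar E A (subst \<theta> l) (subst \<theta> r)"

definition cls :: "('f \<Rightarrow> nat) \<Rightarrow> (('f, 'v) trm \<times> ('f, 'v) trm) set \<Rightarrow> 'x set
                   \<Rightarrow> ('f, 'x) trm \<Rightarrow> ('f, 'x) trm set" where
  "cls ar E A t = {u. eqvE ar E A t u}"

definition TX :: "('f \<Rightarrow> nat) \<Rightarrow> (('f, 'v) trm \<times> ('f, 'v) trm) set \<Rightarrow> 'x set
                  \<Rightarrow> ('f, 'x) trm set set" where
  "TX ar E A = cls ar E A ` {t. wf ar A t}"

definition rep :: "'a set \<Rightarrow> 'a" where
  "rep c = (SOME t. t \<in> c)"

definition etaT :: "('f \<Rightarrow> nat) \<Rightarrow> (('f, 'v) trm \<times> ('f, 'v) trm) set \<Rightarrow> 'x set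
                    \<Rightarrow> 'x \<Rightarrow> ('f, 'x) trm set" where
  "etaT ar E A x = cls ar E A (Var x)"

definition opT :: "('f \<Rightarrow> nat) \<Rightarrow> (('f, 'v) trm \<times> ('f, 'v) trm) set \<Rightarrow> 'x set
                   \<Rightarrow> 'f \<Rightarrow> ('f, 'x) trm set list \<Rightarrow> ('f, 'x) trm set" where
  "opT ar E A f cs = cls ar E A (App f (map rep cs))"

definition Tmap :: "('f \<Rightarrow> nat) \<Rightarrow> (('f, 'v) trm \<times> ('f, 'v) trm) set \<Rightarrow> 'y set
                    \<Rightarrow> ('x \<Rightarrow> 'y) \<Rightarrow> ('f, 'x) trm set \<Rightarrow> ('f, 'y) trm set" where
  "Tmap ar E B g c = cls ar E B (rename g (rep c))"

definition muT :: "('f \<Rightarrow> nat) \<Rightarrow> (('f, 'v) trm \<times> ('f, 'v) trm) set \<Rightarrow> 'x set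
                   \<Rightarrow> ('f, ('f, 'x) trm set) trm set \<Rightarrow> ('f, 'x) trm set" where
  "muT ar E A \<Phi> = cls ar E A (subst rep (rep \<Phi>))"

definition semialgebra :: "('f \<Rightarrow> nat) \<Rightarrow> (('f, 'v) trm \<times> ('f, 'v) trm) set \<Rightarrow> 'x set
                           \<Rightarrow> (('f, 'x) trm set \<Rightarrow> 'x) \<Rightarrow> bool" where
  "semialgebra ar E X \<alpha> \<longleftrightarrow>
     (\<forall>c \<in> TX ar E X. \<alpha> c \<in> X) \<and>
     (\<forall>\<Phi> \<in> TX ar E (TX ar E X).
        \<alpha> (muT ar E X \<Phi>) = \<alpha> (Tmap ar E X \<alpha> \<Phi>))"

(* the Sigma^s-algebra (X, I) induced by alpha; Sigma^s = Sigma + {a:1},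
   encoded as 'f option with None = a *)
fun semialg_interp :: "('f \<Rightarrow> nat) \<Rightarrow> (('f, 'v) trm \<times> ('f, 'v) trm) set \<Rightarrow> 'x set
                        \<Rightarrow> (('f, 'x) trm set \<Rightarrow> 'x) \<Rightarrow> 'f option \<Rightarrow> 'x list \<Rightarrow> 'x" where
  "semialg_interp ar E X \<alpha> None xs = \<alpha> (etaT ar E X (hd xs))"
| "semialg_interp ar E X \<alpha> (Some f) xs = \<alpha> (opT ar E X f (map (etaT ar E X) xs))"

end

theory Submission
  imports Defs
begin

text \<open>
  The semialgebra law \<open>\<alpha> \<circ> \<mu> = \<alpha> \<circ> T\<alpha>\<close>, evaluated at the elements \<open>\<eta>(c)\<close> and
  \<open>op(\<eta> c\<^sub>1, \<dots>, \<eta> c\<^sub>n)\<close> of \<open>T(TX)\<close>, gives \<open>\<alpha>(\<eta>(\<alpha> c)) = \<alpha> c\<close> and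
  \<open>\<alpha>(op(c\<^sub>1, \<dots>, c\<^sub>n)) = \<alpha>(op(\<eta>(\<alpha> c\<^sub>1), \<dots>, \<eta>(\<alpha> c\<^sub>n)))\<close>; so \<open>\<alpha>(op(c\<^sub>1, \<dots>, c\<^sub>n))\<close>
  depends on the \<open>c\<^sub>i\<close> only through the \<open>\<alpha> c\<^sub>i\<close>. By induction on terms,
  \<open>\<alpha>(\<eta>(I(t)\<^sub>\<sigma>)) = \<alpha>(int(t)\<^sub>\<eta>\<^sub>\<sigma>)\<close> for every term \<open>t\<close>, and for \<open>t = op(t\<^sub>1, \<dots>, t\<^sub>n)\<close>
  this shows that \<open>I(t)\<^sub>\<sigma> = \<alpha>(op(\<eta>(I(t\<^sub>i)\<^sub>\<sigma>)))\<close> and \<open>\<alpha>(int(t)\<^sub>\<eta>\<^sub>\<sigma>) = \<alpha>(op(int(t\<^sub>i)\<^sub>\<eta>\<^sub>\<sigma>))\<close>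
  coincide. For a variable the claim would read \<open>\<sigma> v = \<alpha>(\<eta>(\<sigma> v))\<close>, which fails in
  general; hence the depth hypothesis.
\<close>

lemma wf_vars: "wf ar A t \<Longrightarrow> vars t \<subseteq> A"
  by (induction t) auto

lemma wf_subst:
  "wf ar A t \<Longrightarrow> (\<forall>v\<in>vars t. wf ar B (\<theta> v)) \<Longrightarrow> wf ar B (subst \<theta> t)"
  by (induction t) auto

lemma subst_subst: "subst \<theta> (subst \<theta>' t) = subst (subst \<theta> \<circ> \<theta>') t"
  by (induction t) auto

lemma rename_eq_subst: "rename g t = subst (Var \<circ> g) t"
  by (induction t) auto

lemma eval_closed:
  assumes "wf ar V t"
    and "\<forall>v\<in>V. \<phi> v \<in> A"
    and "\<And>f xs. length xs = ar f \<Longrightarrow> set xs \<subseteq> A \<Longrightarrow> I f xs \<in> A"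
  shows "eval I \<phi> t \<in> A"
  using assms(1)
proof (induction t)
  case (App f ts)
  then show ?case by (auto intro!: assms(3))
qed (use assms(2) in simp)

lemma eqvE_subst:
  "eqvE ar E A t u \<Longrightarrow> (\<forall>a\<in>A. wf ar B (\<theta> a))
    \<Longrightarrow> eqvE ar E B (subst \<theta> t) (subst \<theta> u)"
proof (induction rule: eqvE.induct)
  case (refl t)
  then show ?case by (auto intro!: eqvE.refl wf_subst dest: wf_vars)
next
  case (sym t u)
  then show ?case by (auto intro: eqvE.sym)
next
  case (trans t u w)
  then show ?case by (auto intro: eqvE.trans)
next
  case (cong ts f us)
  then have "list_all2 (eqvE ar E B) (map (subst \<theta>) ts) (map (subst \<theta>) us)"
    by (auto simp: list_all2_conv_all_nth)
  with cong show ?case by (auto intro!: eqvE.cong)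
next
  case (inst l r \<theta>')
  then have "eqvE ar E B (subst (subst \<theta> \<circ> \<theta>') l) (subst (subst \<theta> \<circ> \<theta>') r)"
    by (intro eqvE.inst) (auto intro!: wf_subst dest: wf_vars)
  then show ?case by (simp add: subst_subst)
qed

lemma cls_eq: "eqvE ar E A t u \<Longrightarrow> cls ar E A t = cls ar E A u"
  unfolding cls_def by (auto intro: eqvE.sym eqvE.trans)

lemma eqvE_rep_cls: "wf ar A t \<Longrightarrow> eqvE ar E A t (rep (cls ar E A t))"
  unfolding rep_def cls_def by (auto intro: someI eqvE.refl)

lemma cls_rep_cls: "wf ar A t \<Longrightarrow> cls ar E A (rep (cls ar E A t)) = cls ar E A t"
  by (metis cls_eq eqvE_rep_cls)

lemma cls_in_TX: "wf ar A t \<Longrightarrow> cls ar E A t \<in> TX ar E A"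
  unfolding TX_def by auto

lemma etaT_in_TX: "x \<in> A \<Longrightarrow> etaT ar E A x \<in> TX ar E A"
  unfolding etaT_def by (auto intro: cls_in_TX)

lemma Tmap_cls:
  assumes "wf ar A s" and "\<forall>a\<in>A. g a \<in> B"
  shows "Tmap ar E B g (cls ar E A s) = cls ar E B (rename g s)"
proof -
  have "eqvE ar E B (rename g s) (rename g (rep (cls ar E A s)))"
    using eqvE_subst[OF eqvE_rep_cls[OF assms(1)], where \<theta>="Var \<circ> g" and B=B] assms(2)
    by (simp add: rename_eq_subst)
  then show ?thesis
    unfolding Tmap_def by (simp add: cls_eq)
qed

context
  fixes ar :: "'f \<Rightarrow> nat" and E :: "(('f, 'v) trm \<times> ('f, 'v) trm) set"
  assumes E_wf: "\<forall>(l, r) \<in> E. wf ar UNIV l \<and> wf ar UNIV r"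
begin

lemma eqvE_wf: "eqvE ar E A t u \<Longrightarrow> wf ar A t \<and> wf ar A u"
proof (induction rule: eqvE.induct)
  case (cong ts f us)
  then show ?case by (auto simp: list_all2_conv_all_nth in_set_conv_nth)
next
  case (inst l r \<theta>)
  with E_wf show ?case by (auto intro!: wf_subst)
qed auto

lemma wf_rep: "c \<in> TX ar E A \<Longrightarrow> wf ar A (rep c)"
  unfolding TX_def using eqvE_rep_cls eqvE_wf by blast

lemma muT_cls:
  assumes "wf ar (TX ar E A) s"
  shows "muT ar E A (cls ar E (TX ar E A) s) = cls ar E A (subst rep s)"
proof -
  have "eqvE ar E A (subst rep s) (subst rep (rep (cls ar E (TX ar E A) s)))"
    using eqvE_subst[OF eqvE_rep_cls[OF assms]] wf_rep by blast
  then show ?thesis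
    unfolding muT_def by (simp add: cls_eq)
qed

lemma opT_in_TX:
  "set cs \<subseteq> TX ar E A \<Longrightarrow> length cs = ar f \<Longrightarrow> opT ar E A f cs \<in> TX ar E A"
  unfolding opT_def by (intro cls_in_TX) (auto intro: wf_rep)

lemma opT_map_etaT:
  assumes "set xs \<subseteq> A" and "length xs = ar f"
  shows "opT ar E A f (map (etaT ar E A) xs) = cls ar E A (App f (map Var xs))"
proof -
  have "list_all2 (eqvE ar E A) (map Var xs) (map (rep \<circ> etaT ar E A) xs)"
    unfolding list.rel_map list_all2_same
  proof
    fix x assume "x \<in> set xs"
    with assms(1) show "eqvE ar E A (Var x) ((rep \<circ> etaT ar E A) x)"
      unfolding etaT_def comp_def by (intro eqvE_rep_cls) auto
  qed
  then have "eqvE ar E A (App f (map Var xs)) (App f (map rep (map (etaT ar E A) xs)))"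
    using assms(2) by (simp add: eqvE.cong)
  then show ?thesis
    unfolding opT_def by (simp add: cls_eq)
qed

lemma eval_opT_in_TX:
  "wf ar V t \<Longrightarrow> \<forall>v\<in>V. \<phi> v \<in> TX ar E A \<Longrightarrow> eval (opT ar E A) \<phi> t \<in> TX ar E A"
  by (rule eval_closed) (auto intro: opT_in_TX)

context
  fixes X :: "'x set" and \<alpha> :: "('f, 'x) trm set \<Rightarrow> 'x"
  assumes semi: "semialgebra ar E X \<alpha>"
begin

lemma alpha_in_X: "c \<in> TX ar E X \<Longrightarrow> \<alpha> c \<in> X"
  using semi unfolding semialgebra_def by blast

lemma alpha_cls_subst_rep:
  assumes "wf ar (TX ar E X) s"
  shows "\<alpha> (cls ar E X (subst rep s)) = \<alpha> (cls ar E X (rename \<alpha> s))"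
proof -
  have "cls ar E (TX ar E X) s \<in> TX ar E (TX ar E X)"
    using assms by (rule cls_in_TX)
  then have "\<alpha> (muT ar E X (cls ar E (TX ar E X) s))
      = \<alpha> (Tmap ar E X \<alpha> (cls ar E (TX ar E X) s))"
    using semi unfolding semialgebra_def by blast
  moreover have "Tmap ar E X \<alpha> (cls ar E (TX ar E X) s) = cls ar E X (rename \<alpha> s)"
    using assms alpha_in_X by (intro Tmap_cls) auto
  ultimately show ?thesis
    by (simp add: muT_cls[OF assms])
qed

lemma alpha_etaT_alpha:
  assumes "c \<in> TX ar E X"
  shows "\<alpha> (etaT ar E X (\<alpha> c)) = \<alpha> c"
proof -
  have "cls ar E X (rep c) = c"
    using assms unfolding TX_def by (auto simp: cls_rep_cls)
  then show ?thesis
    using alpha_cls_subst_rep[of "Var c"] assms by (simp add: etaT_def)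
qed

lemma alpha_opT_map_etaT_alpha:
  assumes "set cs \<subseteq> TX ar E X" and "length cs = ar f"
  shows "\<alpha> (opT ar E X f (map (etaT ar E X \<circ> \<alpha>) cs)) = \<alpha> (opT ar E X f cs)"
proof -
  have "set (map \<alpha> cs) \<subseteq> X"
    using assms(1) alpha_in_X by auto
  then have "opT ar E X f (map (etaT ar E X \<circ> \<alpha>) cs) = cls ar E X (App f (map (Var \<circ> \<alpha>) cs))"
    using opT_map_etaT[of "map \<alpha> cs" X f] assms(2) by simp
  also have "\<alpha> \<dots> = \<alpha> (cls ar E X (subst rep (App f (map Var cs))))"
  proof -
    have "wf ar (TX ar E X) (App f (map Var cs))"
      using assms by auto
    from alpha_cls_subst_rep[OF this] show ?thesis
      by (simp add: comp_def)
  qed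
  also have "\<dots> = \<alpha> (opT ar E X f cs)"
    by (simp add: opT_def comp_def)
  finally show ?thesis .
qed

lemma alpha_opT_cong:
  assumes "set cs \<subseteq> TX ar E X" "set ds \<subseteq> TX ar E X"
    and "length cs = ar f" "length ds = ar f"
    and "map \<alpha> cs = map \<alpha> ds"
  shows "\<alpha> (opT ar E X f cs) = \<alpha> (opT ar E X f ds)"
proof -
  have "\<alpha> (opT ar E X f cs) = \<alpha> (opT ar E X f (map (etaT ar E X \<circ> \<alpha>) cs))"
    using alpha_opT_map_etaT_alpha[OF assms(1,3)] by simp
  also have "\<dots> = \<alpha> (opT ar E X f (map (etaT ar E X \<circ> \<alpha>) ds))"
    using assms(5) by (metis map_map)
  also have "\<dots> = \<alpha> (opT ar E X f ds)"
    by (rule alpha_opT_map_etaT_alpha[OF assms(2,4)])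
  finally show ?thesis .
qed

lemma eval_semialg_interp_in_X:
  "wf ar V t \<Longrightarrow> \<forall>v\<in>V. \<sigma> v \<in> X
    \<Longrightarrow> eval (\<lambda>f. semialg_interp ar E X \<alpha> (Some f)) \<sigma> t \<in> X"
  by (rule eval_closed) (auto intro!: alpha_in_X opT_in_TX etaT_in_TX)

lemma eval_App_semialg_interp:
  assumes "wf ar V (App f ts)" and "\<forall>v\<in>V. \<sigma> v \<in> X"
    and "\<forall>s\<in>set ts. \<alpha> (etaT ar E X (eval (\<lambda>f. semialg_interp ar E X \<alpha> (Some f)) \<sigma> s))
                  = \<alpha> (eval (opT ar E X) (etaT ar E X \<circ> \<sigma>) s)"
  shows "eval (\<lambda>f. semialg_interp ar E X \<alpha> (Some f)) \<sigma> (App f ts)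
         = \<alpha> (eval (opT ar E X) (etaT ar E X \<circ> \<sigma>) (App f ts))"
proof -
  let ?I = "eval (\<lambda>f. semialg_interp ar E X \<alpha> (Some f)) \<sigma>"
  let ?R = "eval (opT ar E X) (etaT ar E X \<circ> \<sigma>)"
  have "set (map (etaT ar E X \<circ> ?I) ts) \<subseteq> TX ar E X"
    using assms(1,2) by (auto intro!: etaT_in_TX eval_semialg_interp_in_X)
  moreover have "set (map ?R ts) \<subseteq> TX ar E X"
    using assms(1,2) by (auto intro!: eval_opT_in_TX etaT_in_TX)
  moreover have "map \<alpha> (map (etaT ar E X \<circ> ?I) ts) = map \<alpha> (map ?R ts)"
    using assms(3) by simp
  ultimately have "\<alpha> (opT ar E X f (map (etaT ar E X \<circ> ?I) ts)) = \<alpha> (opT ar E X f (map ?R ts))"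
    using assms(1) by (intro alpha_opT_cong) auto
  then show ?thesis
    by (simp add: comp_def)
qed

lemma alpha_etaT_eval_semialg_interp:
  "wf ar V t \<Longrightarrow> \<forall>v\<in>V. \<sigma> v \<in> X
    \<Longrightarrow> \<alpha> (etaT ar E X (eval (\<lambda>f. semialg_interp ar E X \<alpha> (Some f)) \<sigma> t))
      = \<alpha> (eval (opT ar E X) (etaT ar E X \<circ> \<sigma>) t)"
proof (induction t)
  case (Var v)
  then show ?case by simp
next
  case (App f ts)
  then have "eval (\<lambda>f. semialg_interp ar E X \<alpha> (Some f)) \<sigma> (App f ts)
      = \<alpha> (eval (opT ar E X) (etaT ar E X \<circ> \<sigma>) (App f ts))"
    by (intro eval_App_semialg_interp) (auto simp: comp_def simp del: semialg_interp.simps)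
  moreover have "eval (opT ar E X) (etaT ar E X \<circ> \<sigma>) (App f ts) \<in> TX ar E X"
    using App.prems by (intro eval_opT_in_TX) (auto intro: etaT_in_TX)
  ultimately show ?case
    by (simp only: alpha_etaT_alpha)
qed

end

end

theorem lemma9:
  fixes ar :: "'f \<Rightarrow> nat"
    and E :: "(('f, 'v) trm \<times> ('f, 'v) trm) set"
    and X :: "'x set"
    and \<alpha> :: "('f, 'x) trm set \<Rightarrow> 'x"
    and t :: "('f, 'v) trm"
    and \<sigma> :: "'v \<Rightarrow> 'x"
  assumes E_wf: "\<forall>(l, r) \<in> E. wf ar UNIV l \<and> wf ar UNIV r"
    and semi: "semialgebra ar E X \<alpha>"
    and t_wf: "wf ar UNIV t"
    and depth: "depth t \<ge> 1"
    and \<sigma>: "\<forall>v. \<sigma> v \<in> X"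
  shows "eval (\<lambda>f. semialg_interp ar E X \<alpha> (Some f)) \<sigma> t
         = \<alpha> (eval (opT ar E X) (etaT ar E X \<circ> \<sigma>) t)"
proof -
  obtain f ts where t: "t = App f ts"
    using depth by (cases t) auto
  show ?thesis
    unfolding t
  proof (rule eval_App_semialg_interp[OF E_wf semi])
    show "wf ar UNIV (App f ts)" "\<forall>v\<in>UNIV. \<sigma> v \<in> X"
      using t_wf \<sigma> t by auto
    then show "\<forall>s\<in>set ts. \<alpha> (etaT ar E X (eval (\<lambda>f. semialg_interp ar E X \<alpha> (Some f)) \<sigma> s))
        = \<alpha> (eval (opT ar E X) (etaT ar E X \<circ> \<sigma>) s)"
      by (auto intro: alpha_etaT_eval_semialg_interp[OF E_wf semi])
  qed
qed

end
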